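(* Let $n\in\mathbb{N}$ and let $R$ be a ring such that $(r^n-1)((r-1)^n-1)=0$ for all $r\in R$. Then: (1) $\mathrm{char}(R)=|1\cdot\mathbb{Z}|$ is finite and $J(R)$ is a nil ideal; (2) if $n$ is odd, then $R$ is a reduced ring of characteristic $2$ and $J(R)=0$; (3) if $R$ is an algebra over a field $F$, then either $R$ is abelian or $\mathrm{char}(F)$ divides $n$.
   Context: All rings are associative with identity; $J(R)$ is the Jacobson radical and $\mathrm{char}(R):=|1\cdot\mathbb{Z}|$. A ring is reduced if it has no nonzero nilpotent elements, and abelian if all its idempotents are central. *)

theory Defs
  imports Main
begin

definition left_ideal :: "'a::ring_1 set \<Rightarrow> bool" where
  "left_ideal I \<longleftrightarrow> 0 \<in> I \<and> (\<forall>x\<in>I. \<forall>y\<in>I. x + y \<in> I) \<and> (\<forall>x\<in>I. - x \<in> I)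
     \<and> (\<forall>r. \<forall>x\<in>I. r * x \<in> I)"

definition ideal2 :: "'a::ring_1 set \<Rightarrow> bool" where
  "ideal2 I \<longleftrightarrow> left_ideal I \<and> (\<forall>r. \<forall>x\<in>I. x * r \<in> I)"

definition maximal_left_ideal :: "'a::ring_1 set \<Rightarrow> bool" where
  "maximal_left_ideal M \<longleftrightarrow> left_ideal M \<and> M \<noteq> UNIV \<and>
     (\<forall>I. left_ideal I \<and> M \<subseteq> I \<and> I \<noteq> UNIV \<longrightarrow> I = M)"

text \<open>Jacobson radical: intersection of all maximal left ideals (UNIV if there are none).\<close>
definition jacobson :: "'a::ring_1 set" where
  "jacobson = \<Inter> {M. maximal_left_ideal M}"

definition nil_set :: "'a::ring_1 set \<Rightarrow> bool" where
  "nil_set I \<longleftrightarrow> (\<forall>x\<in>I. \<exists>k. x ^ k = 0)"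

definition reduced_ring :: "'a::ring_1 itself \<Rightarrow> bool" where
  "reduced_ring _ \<longleftrightarrow> (\<forall>(x::'a) k. x ^ k = 0 \<longrightarrow> x = 0)"

definition abelian_ring :: "'a::ring_1 itself \<Rightarrow> bool" where
  "abelian_ring _ \<longleftrightarrow> (\<forall>e::'a. e * e = e \<longrightarrow> (\<forall>x. e * x = x * e))"

text \<open>char(R) := |1 * Z|, the cardinality of the additive subgroup generated by 1.\<close>
definition char_set :: "'a::ring_1 itself \<Rightarrow> 'a set" where
  "char_set _ = range (of_int :: int \<Rightarrow> 'a)"

definition is_algebra :: "('f::field \<Rightarrow> 'a::ring_1 \<Rightarrow> 'a) \<Rightarrow> bool" where
  "is_algebra sc \<longleftrightarrow>
     (\<forall>c x y. sc c (x + y) = sc c x + sc c y) \<and>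
     (\<forall>c d x. sc (c + d) x = sc c x + sc d x) \<and>
     (\<forall>c d x. sc c (sc d x) = sc (c * d) x) \<and>
     (\<forall>x. sc 1 x = x) \<and>
     (\<forall>c x y. sc c (x * y) = sc c x * y) \<and>
     (\<forall>c x y. sc c (x * y) = x * sc c y)"

end

theory Submission
  imports Defs
begin

text \<open>
  Substituting \<open>r = 3\<close> into the identity gives \<open>(3\<^sup>n - 1)(2\<^sup>n - 1) = 0\<close>, so the characteristic
  is finite. For every \<open>x\<close> the identity is a monic integral relation of degree \<open>2n\<close>, hence all
  powers of \<open>x\<close> lie in a finite set and \<open>x\<^sup>a = x\<^sup>b\<close> for some \<open>a < b\<close>; for \<open>x \<in> J(R)\<close> the
  element \<open>1 - x\<^sup>b\<^sup>-\<^sup>a\<close> is left invertible, so \<open>x\<^sup>a = 0\<close>.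
  Substituting \<open>r = 1 + y\<close> with \<open>y\<^sup>2 = 0\<close> gives \<open>n y = 0\<close>. For odd \<open>n\<close>, \<open>r = 0\<close> gives \<open>2 = 0\<close>, so
  \<open>n y = y\<close> and \<open>R\<close> has no nonzero square-zero elements, i.e. is reduced. A non-central idempotent
  \<open>e\<close> yields the nonzero square-zero element \<open>e x (1 - e)\<close> or \<open>(1 - e) x e\<close>, which \<open>n\<close> cannot
  annihilate when \<open>n\<close> is invertible in \<open>F\<close>.
\<close>

section \<open>Left ideals and the Jacobson radical\<close>

lemma left_ideal_eq_UNIV_iff: "left_ideal I \<Longrightarrow> I = UNIV \<longleftrightarrow> (1::'a::ring_1) \<in> I"
  unfolding left_ideal_def by (metis UNIV_I UNIV_eq_I mult.right_neutral)

lemma left_ideal_Inter: "(\<And>I. I \<in> S \<Longrightarrow> left_ideal I) \<Longrightarrow> left_ideal (\<Inter>S)"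
  unfolding left_ideal_def by blast

lemma left_ideal_chain_Union:
  assumes "C \<noteq> {}" and ideal: "\<And>I. I \<in> C \<Longrightarrow> left_ideal I"
    and chain: "\<And>I J. I \<in> C \<Longrightarrow> J \<in> C \<Longrightarrow> I \<subseteq> J \<or> J \<subseteq> I"
  shows "left_ideal (\<Union>C)"
  unfolding left_ideal_def
proof (intro conjI ballI allI)
  show "0 \<in> \<Union>C" using assms(1) ideal unfolding left_ideal_def by blast
  fix x y assume "x \<in> \<Union>C" "y \<in> \<Union>C"
  then obtain I J where "I \<in> C" "J \<in> C" "x \<in> I" "y \<in> J" by blast
  with ideal chain[of I J] show "x + y \<in> \<Union>C" unfolding left_ideal_def by blast
next
  fix x assume "x \<in> \<Union>C"
  with ideal show "- x \<in> \<Union>C" unfolding left_ideal_def by blast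
next
  fix r x assume "x \<in> \<Union>C"
  with ideal show "r * x \<in> \<Union>C" unfolding left_ideal_def by blast
qed

lemma left_ideal_left_multiples: "left_ideal (range (\<lambda>s. s * (a::'a::ring_1)))"
  unfolding left_ideal_def
proof (intro conjI ballI allI)
  have "0 = 0 * a" by simp
  then show "0 \<in> range (\<lambda>s. s * a)" by blast
  fix x y assume "x \<in> range (\<lambda>s. s * a)" "y \<in> range (\<lambda>s. s * a)"
  then obtain s t where "x = s * a" "y = t * a" by blast
  then have "x + y = (s + t) * a" by (simp add: distrib_right)
  then show "x + y \<in> range (\<lambda>s. s * a)" by blast
next
  fix x assume "x \<in> range (\<lambda>s. s * a)"
  then obtain s where "x = s * a" by blast
  then have "- x = (- s) * a" by simp
  then show "- x \<in> range (\<lambda>s. s * a)" by blast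
next
  fix r x assume "x \<in> range (\<lambda>s. s * a)"
  then obtain s where "x = s * a" by blast
  then have "r * x = (r * s) * a" by (simp add: mult.assoc)
  then show "r * x \<in> range (\<lambda>s. s * a)" by blast
qed

lemma left_ideal_add_left_multiples:
  assumes M: "left_ideal M"
  shows "left_ideal {m + r * (x::'a::ring_1) | m r. m \<in> M}" (is "left_ideal ?I")
  unfolding left_ideal_def
proof (intro conjI ballI allI)
  have "0 \<in> M" using M unfolding left_ideal_def by blast
  moreover have "(0::'a) = 0 + 0 * x" by simp
  ultimately show "0 \<in> ?I" by blast
  fix a b assume "a \<in> ?I" "b \<in> ?I"
  then obtain m r m' r' where ab: "a = m + r * x" "b = m' + r' * x" "m \<in> M" "m' \<in> M" by blast
  then have "m + m' \<in> M" using M unfolding left_ideal_def by blast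
  moreover have "a + b = (m + m') + (r + r') * x" using ab by (simp add: algebra_simps)
  ultimately show "a + b \<in> ?I" by blast
next
  fix a assume "a \<in> ?I"
  then obtain m r where a: "a = m + r * x" "m \<in> M" by blast
  then have "- m \<in> M" using M unfolding left_ideal_def by blast
  moreover have "- a = - m + (- r) * x" using a by simp
  ultimately show "- a \<in> ?I" by blast
next
  fix s a assume "a \<in> ?I"
  then obtain m r where a: "a = m + r * x" "m \<in> M" by blast
  then have "s * m \<in> M" using M unfolding left_ideal_def by blast
  moreover have "s * a = s * m + (s * r) * x" using a by (simp add: algebra_simps)
  ultimately show "s * a \<in> ?I" by blast
qed

lemma exists_maximal_left_ideal:
  assumes L: "left_ideal (L::'a::ring_1 set)" "L \<noteq> UNIV"
  shows "\<exists>M. maximal_left_ideal M \<and> L \<subseteq> M"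
proof -
  let ?A = "{I. left_ideal I \<and> L \<subseteq> I \<and> I \<noteq> UNIV}"
  have "\<exists>M\<in>?A. \<forall>I\<in>?A. M \<subseteq> I \<longrightarrow> I = M"
  proof (rule subset_Zorn)
    fix C assume "subset.chain ?A C"
    then have C: "C \<subseteq> ?A" "\<And>I J. I \<in> C \<Longrightarrow> J \<in> C \<Longrightarrow> I \<subseteq> J \<or> J \<subseteq> I"
      by (auto simp: subset.chain_def)
    show "\<exists>U\<in>?A. \<forall>I\<in>C. I \<subseteq> U"
    proof (cases "C = {}")
      case True
      then show ?thesis using L by blast
    next
      case False
      have "left_ideal (\<Union>C)"
        by (rule left_ideal_chain_Union[OF False]) (use C in auto)
      moreover have "1 \<notin> \<Union>C"
      proof
        assume "1 \<in> \<Union>C"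
        then obtain I where "I \<in> C" "1 \<in> I" by blast
        with C(1) show False using left_ideal_eq_UNIV_iff[of I] by blast
      qed
      moreover have "L \<subseteq> \<Union>C" using False C(1) by blast
      ultimately have "\<Union>C \<in> ?A" by blast
      then show ?thesis by blast
    qed
  qed
  then obtain M where M: "M \<in> ?A" and max: "\<forall>I\<in>?A. M \<subseteq> I \<longrightarrow> I = M" ..
  have "maximal_left_ideal M"
    unfolding maximal_left_ideal_def
  proof (intro conjI allI impI)
    show "left_ideal M" "M \<noteq> UNIV" using M by auto
    fix I assume I: "left_ideal I \<and> M \<subseteq> I \<and> I \<noteq> UNIV"
    then have "I \<in> ?A" using M by auto
    then show "I = M" using I max by blast
  qed
  then show ?thesis using M by blast
qed

lemma left_ideal_jacobson: "left_ideal (jacobson :: 'a::ring_1 set)"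
  unfolding jacobson_def by (rule left_ideal_Inter) (simp add: maximal_left_ideal_def)

lemma jacobson_left_invertible:
  assumes x: "x \<in> (jacobson :: 'a::ring_1 set)"
  shows "\<exists>u. u * (1 - x) = 1"
proof (rule ccontr)
  assume "\<nexists>u. u * (1 - x) = 1"
  then have "range (\<lambda>s. s * (1 - x)) \<noteq> UNIV" by (metis UNIV_I imageE)
  then obtain M where M: "maximal_left_ideal M" "range (\<lambda>s. s * (1 - x)) \<subseteq> M"
    using exists_maximal_left_ideal[OF left_ideal_left_multiples] by blast
  then have ideal: "left_ideal M" unfolding maximal_left_ideal_def by blast
  have "1 - x \<in> M" using M(2) rangeI[of "\<lambda>s. s * (1 - x)" 1] by auto
  moreover have "x \<in> M" using x M(1) unfolding jacobson_def by blast
  ultimately have "(1 - x) + x \<in> M" using ideal unfolding left_ideal_def by blast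
  then have "M = UNIV" using left_ideal_eq_UNIV_iff[OF ideal] by simp
  then show False using M(1) unfolding maximal_left_ideal_def by blast
qed

lemma jacobsonI:
  assumes inv: "\<And>r. \<exists>u. u * (1 - r * x) = (1::'a::ring_1)"
  shows "x \<in> jacobson"
  unfolding jacobson_def
proof
  fix M :: "'a set" assume "M \<in> {M. maximal_left_ideal M}"
  then have ideal: "left_ideal M" and proper: "M \<noteq> UNIV"
    and max: "\<And>I. left_ideal I \<Longrightarrow> M \<subseteq> I \<Longrightarrow> I \<noteq> UNIV \<Longrightarrow> I = M"
    unfolding maximal_left_ideal_def by blast+
  show "x \<in> M"
  proof (rule ccontr)
    assume "x \<notin> M"
    let ?I = "{m + r * x | m r. m \<in> M}"
    have zero: "0 \<in> M" using ideal unfolding left_ideal_def by blast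
    have "M \<subseteq> ?I" by (force intro: exI[of _ 0])
    moreover have "x \<in> ?I" using zero by (force intro: exI[of _ 1])
    ultimately have "?I = UNIV"
      using max[OF left_ideal_add_left_multiples[OF ideal]] \<open>x \<notin> M\<close> by blast
    then obtain m r where m: "m \<in> M" and "1 = m + r * x" by blast
    then have "m = 1 - r * x" by (simp add: eq_diff_eq)
    moreover obtain u where "u * (1 - r * x) = 1" using inv by blast
    ultimately have "1 \<in> M" using m ideal unfolding left_ideal_def by metis
    then show False using proper left_ideal_eq_UNIV_iff[OF ideal] by blast
  qed
qed

lemma jacobson_mult_right:
  assumes x: "x \<in> (jacobson :: 'a::ring_1 set)"
  shows "x * r \<in> jacobson"
proof (rule jacobsonI)
  fix s
  have "(r * s) * x \<in> jacobson" using x left_ideal_jacobson unfolding left_ideal_def by blast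
  then obtain w where w: "w * (1 - r * s * x) = 1" using jacobson_left_invertible by blast
  \<comment> \<open>a left inverse \<open>w\<close> of \<open>1 - ab\<close> gives the left inverse \<open>1 + b w a\<close> of \<open>1 - ba\<close>\<close>
  have "(1 + s * x * w * r) * (1 - s * (x * r)) = 1 - s * x * r + s * x * (w * (1 - r * s * x)) * r"
    by (simp add: algebra_simps)
  also have "\<dots> = 1" using w by simp
  finally show "\<exists>u. u * (1 - s * (x * r)) = 1" by blast
qed

lemma ideal_jacobson: "ideal2 (jacobson :: 'a::ring_1 set)"
  unfolding ideal2_def using left_ideal_jacobson jacobson_mult_right by blast

lemma nil_jacobson_if_power_repeats:
  assumes repeats: "\<And>x::'a::ring_1. \<exists>a b. a < b \<and> x ^ a = x ^ b"
  shows "nil_set (jacobson :: 'a set)"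
  unfolding nil_set_def
proof
  fix x :: 'a assume x: "x \<in> jacobson"
  obtain a b where "a < b" and xab: "x ^ a = x ^ b" using repeats by blast
  then obtain c where "b = Suc c + a" by (metis add.commute add_Suc less_iff_Suc_add)
  then have ab: "x ^ a = x ^ Suc c * x ^ a" using xab by (simp only: power_add)
  have "x ^ c * x \<in> jacobson" using x left_ideal_jacobson unfolding left_ideal_def by blast
  then obtain u where u: "u * (1 - x ^ Suc c) = 1"
    using jacobson_left_invertible by (metis power_Suc2)
  have "x ^ a = u * ((1 - x ^ Suc c) * x ^ a)" by (simp only: u mult.assoc[symmetric] mult_1)
  also have "\<dots> = 0" using ab by (simp add: left_diff_distrib)
  finally show "\<exists>k. x ^ k = 0" by blast
qed

lemma nil_left_ideal_eq_0_if_reduced: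
  assumes "reduced_ring TYPE('a::ring_1)" "left_ideal (I :: 'a set)" "nil_set I"
  shows "I = {0}"
  using assms unfolding reduced_ring_def left_ideal_def nil_set_def by blast

section \<open>The characteristic\<close>

lemma of_int_mod_eq:
  assumes "of_int m = (0::'a::ring_1)"
  shows "(of_int (k mod m) :: 'a) = of_int k"
proof -
  have "(of_int k :: 'a) = of_int (m * (k div m) + k mod m)" by simp
  also have "\<dots> = of_int (k mod m)" by (simp only: of_int_add of_int_mult assms) simp
  finally show ?thesis by simp
qed

lemma ex_pos_of_int_eq_0_if_identity:
  assumes "n \<ge> 1" and rel3: "((3::'a::ring_1) ^ n - 1) * ((3 - 1) ^ n - 1) = 0"
  shows "\<exists>m>0. of_int m = (0::'a)"
proof (intro exI conjI)
  show "of_int ((3 ^ n - 1) * (2 ^ n - 1)) = (0::'a)" using rel3 by simp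
  have "(3::int) ^ n > 1" "(2::int) ^ n > 1" using assms(1) by (auto intro: one_less_power)
  then show "(3 ^ n - 1) * (2 ^ n - 1) > (0::int)" by simp
qed

lemma finite_char_set:
  assumes "of_int m = (0::'a::ring_1)" "m > 0"
  shows "finite (char_set TYPE('a))"
proof -
  have "char_set TYPE('a) \<subseteq> of_int ` {0..<m}"
  proof
    fix z assume "z \<in> char_set TYPE('a)"
    then obtain k where "z = of_int k" unfolding char_set_def by blast
    then have "z = of_int (k mod m)" using of_int_mod_eq[OF assms(1)] by simp
    moreover have "k mod m \<in> {0..<m}" using assms(2) by simp
    ultimately show "z \<in> of_int ` {0..<m}" by blast
  qed
  then show ?thesis by (rule finite_subset) simp
qed

lemma of_nat_odd_eq_1:
  assumes "(2::'a::ring_1) = 0" "odd n"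
  shows "of_nat n = (1::'a)"
proof -
  obtain k where "n = 2 * k + 1" using assms(2) by (rule oddE)
  then show ?thesis using assms(1) by simp
qed

lemma char_set_eq_if_two_eq_0:
  assumes "(2::'a::ring_1) = 0"
  shows "char_set TYPE('a) = {0, 1}"
proof
  show "char_set TYPE('a) \<subseteq> {0, 1}"
  proof
    fix z assume "z \<in> char_set TYPE('a)"
    then obtain k where z: "z = of_int k" unfolding char_set_def by blast
    have "(of_int 2 :: 'a) = 0" using assms by simp
    from of_int_mod_eq[OF this, of k] z have "z = of_int (k mod 2)" by simp
    moreover have "k mod 2 = 0 \<or> k mod 2 = 1" by presburger
    ultimately show "z \<in> {0, 1}" by auto
  qed
  show "{0, 1} \<subseteq> char_set TYPE('a)"
    unfolding char_set_def by (auto intro: range_eqI[of _ _ 0] range_eqI[of _ _ 1])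
qed

section \<open>Integral relations and periodic powers\<close>

definition int_poly_span :: "'a::ring_1 \<Rightarrow> nat \<Rightarrow> 'a set" where
  "int_poly_span x d = range (\<lambda>c. \<Sum>i<d. of_int (c i) * x ^ i)"

lemma int_poly_spanI: "y = (\<Sum>i<d. of_int (c i) * x ^ i) \<Longrightarrow> y \<in> int_poly_span x d"
  unfolding int_poly_span_def by blast

lemma int_poly_spanE:
  assumes "y \<in> int_poly_span x d"
  obtains c where "y = (\<Sum>i<d. of_int (c i) * x ^ i)"
  using assms unfolding int_poly_span_def by blast

lemma int_poly_span_add:
  assumes "y \<in> int_poly_span x d" "z \<in> int_poly_span x d"
  shows "y + z \<in> int_poly_span x d"
proof -
  obtain c where "y = (\<Sum>i<d. of_int (c i) * x ^ i)" using assms(1) by (rule int_poly_spanE)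
  moreover obtain c' where "z = (\<Sum>i<d. of_int (c' i) * x ^ i)" using assms(2) by (rule int_poly_spanE)
  ultimately have "y + z = (\<Sum>i<d. of_int (c i + c' i) * x ^ i)" by (simp add: sum.distrib distrib_right)
  then show ?thesis by (rule int_poly_spanI)
qed

lemma int_poly_span_diff:
  assumes "y \<in> int_poly_span x d" "z \<in> int_poly_span x d"
  shows "y - z \<in> int_poly_span x d"
proof -
  obtain c where "y = (\<Sum>i<d. of_int (c i) * x ^ i)" using assms(1) by (rule int_poly_spanE)
  moreover obtain c' where "z = (\<Sum>i<d. of_int (c' i) * x ^ i)" using assms(2) by (rule int_poly_spanE)
  ultimately have "y - z = (\<Sum>i<d. of_int (c i - c' i) * x ^ i)"
    by (simp add: sum_subtractf left_diff_distrib)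
  then show ?thesis by (rule int_poly_spanI)
qed

lemma int_poly_span_of_int_mult:
  assumes "y \<in> int_poly_span x d"
  shows "of_int k * y \<in> int_poly_span x d"
proof -
  obtain c where "y = (\<Sum>i<d. of_int (c i) * x ^ i)" using assms by (rule int_poly_spanE)
  then have "of_int k * y = (\<Sum>i<d. of_int (k * c i) * x ^ i)"
    by (simp add: sum_distrib_left mult.assoc)
  then show ?thesis by (rule int_poly_spanI)
qed

lemma int_poly_span_power: "i < d \<Longrightarrow> x ^ i \<in> int_poly_span x d"
  by (rule int_poly_spanI[where c = "\<lambda>j. if j = i then 1 else 0"])
    (simp add: if_distrib[of of_int] if_distrib[of "\<lambda>a. a * _"] sum.delta' cong: if_cong)

lemma int_poly_span_mono:
  assumes "d \<le> d'" "y \<in> int_poly_span x d"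
  shows "y \<in> int_poly_span x d'"
proof -
  obtain c where y: "y = (\<Sum>i<d. of_int (c i) * x ^ i)" using assms(2) by (rule int_poly_spanE)
  have "(\<Sum>i<d'. of_int (if i < d then c i else 0) * x ^ i) = (\<Sum>i<d. of_int (c i) * x ^ i)"
  proof -
    have "{..<d'} \<inter> {i. i < d} = {..<d}" using assms(1) by auto
    then show ?thesis
      by (simp add: if_distrib[of of_int] if_distrib[of "\<lambda>a. a * _"] sum.If_cases cong: if_cong)
  qed
  then show ?thesis using y by (metis int_poly_spanI)
qed

lemma int_poly_span_mult_left:
  assumes "y \<in> int_poly_span x d"
  shows "x * y \<in> int_poly_span x (Suc d)"
proof -
  obtain c where y: "y = (\<Sum>i<d. of_int (c i) * x ^ i)" using assms by (rule int_poly_spanE)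
  have "(\<Sum>i<Suc d. of_int (if i = 0 then 0 else c (i - 1)) * x ^ i)
      = (\<Sum>i<d. of_int (c i) * x ^ Suc i)"
    by (subst sum.lessThan_Suc_shift) simp
  also have "\<dots> = x * y"
    unfolding y sum_distrib_left
    by (rule sum.cong) (simp_all add: mult.assoc, metis mult.assoc mult_of_int_commute)
  finally show ?thesis by (metis int_poly_spanI)
qed

lemma int_poly_span_power_mult:
  "y \<in> int_poly_span x d \<Longrightarrow> x ^ a * y \<in> int_poly_span x (a + d)"
  by (induction a) (simp_all add: mult.assoc int_poly_span_mult_left)

lemma int_poly_span_Suc_absorb:
  assumes top: "x ^ d \<in> int_poly_span x d" and y: "y \<in> int_poly_span x (Suc d)"
  shows "y \<in> int_poly_span x d"
proof -
  obtain c where "y = (\<Sum>i<d. of_int (c i) * x ^ i) + of_int (c d) * x ^ d"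
    using y by (auto elim: int_poly_spanE)
  then show ?thesis
    by (metis int_poly_spanI int_poly_span_add int_poly_span_of_int_mult top)
qed

lemma powers_in_int_poly_span:
  assumes "x ^ d \<in> int_poly_span x d" "0 < d"
  shows "x ^ k \<in> int_poly_span x d"
proof (induction k)
  case 0
  show ?case using assms(2) int_poly_span_power[of 0 d x] by simp
next
  case (Suc k)
  then show ?case using int_poly_span_Suc_absorb[OF assms(1) int_poly_span_mult_left] by simp
qed

lemma finite_int_poly_span:
  assumes "of_int m = (0::'a::ring_1)" "m > 0"
  shows "finite (int_poly_span (x::'a) d)"
proof -
  let ?C = "{cs. set cs \<subseteq> {0..<m} \<and> length cs = d}"
  have "int_poly_span x d \<subseteq> (\<lambda>cs. \<Sum>i<d. of_int (cs ! i) * x ^ i) ` ?C"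
  proof
    fix y assume "y \<in> int_poly_span x d"
    then obtain c where y: "y = (\<Sum>i<d. of_int (c i) * x ^ i)" by (rule int_poly_spanE)
    let ?cs = "map (\<lambda>i. c i mod m) [0..<d]"
    have "y = (\<Sum>i<d. of_int (?cs ! i) * x ^ i)"
      unfolding y by (rule sum.cong) (simp_all add: of_int_mod_eq[OF assms(1)])
    moreover have "?cs \<in> ?C" using assms(2) by auto
    ultimately show "y \<in> (\<lambda>cs. \<Sum>i<d. of_int (cs ! i) * x ^ i) ` ?C" by blast
  qed
  moreover have "finite ?C" by (rule finite_lists_length_eq) simp
  ultimately show ?thesis by (meson finite_imageI finite_subset)
qed

lemma power_repeats_if_int_relation:
  assumes m: "of_int m = (0::'a::ring_1)" "m > 0"
    and top: "x ^ d \<in> int_poly_span x d" and "0 < d"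
  shows "\<exists>a b. a < b \<and> (x::'a) ^ a = x ^ b"
proof -
  let ?V = "int_poly_span x d"
  have "(\<lambda>k. x ^ k) ` {..card ?V} \<subseteq> ?V"
    using powers_in_int_poly_span[OF top \<open>0 < d\<close>] by (simp add: image_subset_iff)
  then have "card ((\<lambda>k. x ^ k) ` {..card ?V}) \<le> card ?V"
    by (rule card_mono[OF finite_int_poly_span[OF m]])
  then have "card ((\<lambda>k. x ^ k) ` {..card ?V}) < card {..card ?V}" by simp
  then have "\<not> inj_on (\<lambda>k. x ^ k) {..card ?V}" by (rule pigeonhole)
  then obtain a b where "a \<noteq> b" "x ^ a = x ^ b" unfolding inj_on_def by blast
  then show ?thesis by (metis linorder_neqE_nat)
qed

lemma minus_one_power_diff_in_int_poly_span: "(x - 1) ^ k - x ^ k \<in> int_poly_span (x::'a::ring_1) k"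
proof (induction k)
  case 0
  show ?case by (rule int_poly_spanI[where c = "\<lambda>_. 0"]) simp
next
  case (Suc k)
  define w where "w = (x - 1) ^ k - x ^ k"
  have "(x - 1) ^ Suc k = (x - 1) * (x ^ k + w)" by (simp add: w_def)
  then have "(x - 1) ^ Suc k - x ^ Suc k = x * w - w - x ^ k" by (simp add: algebra_simps)
  moreover have "x * w \<in> int_poly_span x (Suc k)"
    using int_poly_span_mult_left Suc w_def by blast
  moreover have "w \<in> int_poly_span x (Suc k)"
    using int_poly_span_mono[of k "Suc k"] Suc w_def by simp
  moreover have "x ^ k \<in> int_poly_span x (Suc k)" by (rule int_poly_span_power) simp
  ultimately show ?case by (simp add: int_poly_span_diff)
qed

text \<open>The identity at \<open>x\<close> is monic of degree \<open>2n\<close>: modulo lower powers it reads \<open>x\<^sup>2\<^sup>n = 0\<close>.\<close>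
lemma top_power_in_int_poly_span:
  assumes "n \<ge> 1" and rel: "(x ^ n - 1) * ((x - 1) ^ n - 1) = (0::'a::ring_1)"
  shows "x ^ (2 * n) \<in> int_poly_span x (2 * n)"
proof -
  define w where "w = (x - 1) ^ n - x ^ n"
  have w: "w \<in> int_poly_span x n" unfolding w_def by (rule minus_one_power_diff_in_int_poly_span)
  have "x ^ (2 * n) = x ^ n * x ^ n" by (simp add: mult_2 power_add)
  also have "\<dots> = (x ^ n - 1) * (x ^ n + w - 1) - x ^ n * w + x ^ n + x ^ n + w - 1"
    by (simp add: algebra_simps)
  also have "\<dots> = x ^ n + x ^ n + w - 1 - x ^ n * w" using rel by (simp add: w_def)
  finally have top: "x ^ (2 * n) = x ^ n + x ^ n + w - 1 - x ^ n * w" .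
  have "x ^ n \<in> int_poly_span x (2 * n)" "1 \<in> int_poly_span x (2 * n)"
    using assms(1) int_poly_span_power[of n "2 * n" x] int_poly_span_power[of 0 "2 * n" x] by simp_all
  moreover have "w \<in> int_poly_span x (2 * n)" using int_poly_span_mono[OF _ w, of "2 * n"] by simp
  moreover have "x ^ n * w \<in> int_poly_span x (2 * n)"
    using int_poly_span_power_mult[OF w, of n] by (simp add: mult_2)
  ultimately show ?thesis unfolding top by (intro int_poly_span_add int_poly_span_diff)
qed

lemma power_repeats_if_identity:
  assumes "n \<ge> 1" and identity: "\<forall>r::'a::ring_1. (r ^ n - 1) * ((r - 1) ^ n - 1) = 0"
  shows "\<exists>a b. a < b \<and> (x::'a) ^ a = x ^ b"
proof -
  obtain m where "m > 0" "of_int m = (0::'a)" using ex_pos_of_int_eq_0_if_identity assms by blast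
  moreover have "x ^ (2 * n) \<in> int_poly_span x (2 * n)"
    using top_power_in_int_poly_span assms by blast
  moreover have "0 < 2 * n" using assms(1) by simp
  ultimately show ?thesis by (intro power_repeats_if_int_relation[of m])
qed

section \<open>Square-zero elements\<close>

lemma one_plus_square_zero_power:
  assumes "y * y = 0"
  shows "(1 + y) ^ k = 1 + of_nat k * (y::'a::ring_1)"
proof (induction k)
  case 0
  show ?case by simp
next
  case (Suc k)
  have "(1 + y) ^ Suc k = 1 + of_nat k * y + y + of_nat k * (y * y)"
    by (simp add: Suc algebra_simps mult_of_nat_commute)
  then show ?case using assms by (simp add: algebra_simps)
qed

lemma of_nat_mult_square_zero_eq_0:
  assumes "n \<ge> 1" and rel: "((1 + y) ^ n - 1) * ((1 + y - 1) ^ n - 1) = (0::'a::ring_1)"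
    and y: "y * y = 0"
  shows "of_nat n * y = 0"
proof -
  obtain k where n: "n = Suc k" using assms(1) by (cases n) auto
  have "y * y ^ n = 0" unfolding n power_Suc by (simp add: mult.assoc[symmetric] y)
  have "0 = (of_nat n * y) * (y ^ n - 1)"
    using rel by (simp add: one_plus_square_zero_power[OF y])
  also have "\<dots> = of_nat n * (y * y ^ n) - of_nat n * y"
    by (simp add: right_diff_distrib mult.assoc)
  also have "\<dots> = - (of_nat n * y)" using \<open>y * y ^ n = 0\<close> by simp
  finally show ?thesis by simp
qed

lemma reduced_ringI:
  assumes square_zero: "\<And>y::'a::ring_1. y * y = 0 \<Longrightarrow> y = 0"
  shows "reduced_ring TYPE('a)"
  unfolding reduced_ring_def
proof (intro allI impI)
  fix x :: 'a and k assume "x ^ k = 0"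
  then show "x = 0"
  proof (induction k rule: less_induct)
    case (less k)
    show ?case
    proof (cases "k \<le> 1")
      case True
      then have "k = 0 \<or> k = 1" by auto
      then show ?thesis using less.prems by auto
    next
      case False
      then have "(k - 1) + (k - 1) = k + (k - 2)" by simp
      then have "x ^ (k - 1) * x ^ (k - 1) = x ^ k * x ^ (k - 2)"
        by (simp only: power_add[symmetric])
      then have "x ^ (k - 1) * x ^ (k - 1) = 0" using less.prems by simp
      then have "x ^ (k - 1) = 0" by (rule square_zero)
      then show ?thesis using less.IH[of "k - 1"] False by simp
    qed
  qed
qed

lemma square_zero_if_not_abelian:
  assumes "\<not> abelian_ring TYPE('a)"
  obtains a :: "'a::ring_1" where "a \<noteq> 0" "a * a = 0"
proof -
  obtain e x :: 'a where e: "e * e = e" and "e * x \<noteq> x * e"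
    using assms unfolding abelian_ring_def by blast
  have "e * x - x * e = e * x * (1 - e) - (1 - e) * x * e" by (simp add: algebra_simps)
  then have "e * x * (1 - e) \<noteq> 0 \<or> (1 - e) * x * e \<noteq> 0" using \<open>e * x \<noteq> x * e\<close> by auto
  moreover have "(1 - e) * e = 0" "e * (1 - e) = 0" using e by (simp_all add: algebra_simps)
  then have "(e * x * (1 - e)) * (e * x * (1 - e)) = 0" "((1 - e) * x * e) * ((1 - e) * x * e) = 0"
    by (simp_all add: mult.assoc) (simp_all add: mult.assoc[symmetric])
  ultimately show ?thesis using that by blast
qed

lemma algebra_scale_of_nat:
  assumes "is_algebra (sc :: 'f::field \<Rightarrow> 'a::ring_1 \<Rightarrow> 'a)"
  shows "sc (of_nat k) y = of_nat k * y"
proof -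
  have add: "sc (c + d) y = sc c y + sc d y" and one: "sc 1 y = y" for c d
    using assms unfolding is_algebra_def by blast+
  show ?thesis
  proof (induction k)
    case 0
    show ?case using add[of 0 0] by simp
  next
    case (Suc k)
    then show ?case using add[of 1 "of_nat k"] one by (simp add: distrib_right)
  qed
qed

lemma algebra_eq_0_if_of_nat_mult_eq_0:
  assumes sc: "is_algebra (sc :: 'f::field \<Rightarrow> 'a::ring_1 \<Rightarrow> 'a)"
    and "of_nat n \<noteq> (0::'f)" and "of_nat n * y = (0::'a)"
  shows "y = 0"
proof -
  have add: "sc c (u + v) = sc c u + sc c v" and assoc: "sc c (sc d u) = sc (c * d) u"
    and one: "sc 1 u = u" for c d u v
    using sc unfolding is_algebra_def by blast+
  have zero: "sc c 0 = 0" for c using add[of c 0 0] by simp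
  have "y = sc (inverse (of_nat n) * of_nat n) y" using \<open>of_nat n \<noteq> 0\<close> one by simp
  also have "\<dots> = sc (inverse (of_nat n)) (sc (of_nat n) y)" by (simp only: assoc)
  also have "\<dots> = 0" using algebra_scale_of_nat[OF sc] assms(3) zero by simp
  finally show ?thesis .
qed

theorem lemma2p2:
  fixes n :: nat
  assumes n_pos: "n \<ge> 1"
    and hyp: "\<forall>r::'a::ring_1. (r ^ n - 1) * ((r - 1) ^ n - 1) = 0"
  shows "(finite (char_set TYPE('a)) \<and> ideal2 (jacobson :: 'a set) \<and> nil_set (jacobson :: 'a set))
    \<and> (odd n \<longrightarrow> reduced_ring TYPE('a) \<and> card (char_set TYPE('a)) = 2
           \<and> (jacobson :: 'a set) = {0})
    \<and> (\<forall>sc :: 'f::field \<Rightarrow> 'a \<Rightarrow> 'a. is_algebra sc \<longrightarrow>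
           abelian_ring TYPE('a) \<or> CHAR('f) dvd n)"
proof -
  have rel: "(r ^ n - 1) * ((r - 1) ^ n - 1) = 0" for r :: 'a using hyp by blast
  obtain m where "m > 0" "of_int m = (0::'a)" using ex_pos_of_int_eq_0_if_identity[OF n_pos rel] by blast
  then have part1: "finite (char_set TYPE('a)) \<and> ideal2 (jacobson :: 'a set) \<and> nil_set (jacobson :: 'a set)"
    using finite_char_set ideal_jacobson nil_jacobson_if_power_repeats power_repeats_if_identity[OF n_pos hyp]
    by blast
  have torsion: "of_nat n * y = 0" if "y * y = 0" for y :: 'a
    using of_nat_mult_square_zero_eq_0[OF n_pos rel that] .
  have part2: "reduced_ring TYPE('a) \<and> card (char_set TYPE('a)) = 2 \<and> (jacobson :: 'a set) = {0}"
    if "odd n"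
  proof -
    have two: "(2::'a) = 0" using rel[of 0] n_pos \<open>odd n\<close> by (simp add: power_0_left)
    have "y = 0" if "y * y = 0" for y :: 'a
      using torsion[OF that] of_nat_odd_eq_1[OF two \<open>odd n\<close>] by simp
    then have "reduced_ring TYPE('a)" by (rule reduced_ringI)
    moreover have "(jacobson :: 'a set) = {0}"
      using nil_left_ideal_eq_0_if_reduced calculation left_ideal_jacobson part1 by blast
    ultimately show ?thesis using char_set_eq_if_two_eq_0[OF two] by simp
  qed
  have part3: "abelian_ring TYPE('a) \<or> CHAR('f) dvd n" if sc: "is_algebra (sc :: 'f::field \<Rightarrow> 'a \<Rightarrow> 'a)"
    for sc
  proof (rule ccontr)
    assume "\<not> (abelian_ring TYPE('a) \<or> CHAR('f) dvd n)"
    then have non_abelian: "\<not> abelian_ring TYPE('a)" and n_unit: "of_nat n \<noteq> (0::'f)"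
      by (auto simp: of_nat_eq_0_iff_char_dvd)
    obtain a :: 'a where "a \<noteq> 0" "a * a = 0" using square_zero_if_not_abelian[OF non_abelian] .
    then show False using algebra_eq_0_if_of_nat_mult_eq_0[OF sc n_unit torsion] by blast
  qed
  show ?thesis using part1 part2 part3 by blast
qed

end
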